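(* Let $t=\lceil\frac{n-\kappa}{2}\rceil$ and $\mathrm{Small}(x)=\mathrm{Small}_t(x)$. Let $u\ne v$ be vertices with $\kappa(u,v)=\kappa$. If $\{u,v\}\notin E$, then $u$ and $v$ are disconnected by $\mathrm{Small}(u)$ or by $\mathrm{Small}(v)$ (in particular at least one of them exists). If $\{u,v\}\in E$, then either $\mathrm{Small}(u)$ exists, $v\in\mathrm{Small}(u)$, and deleting the vertex set $\mathrm{Small}(u)\setminus\{v\}$ together with the edge $\{u,v\}$ disconnects $u$ from $v$; or the same holds with the roles of $u$ and $v$ exchanged.
   Context: $G=(V,E)$ is a finite, simple, connected, undirected, non-complete graph with $n=|V|$; $\kappa$ is its vertex connectivity, assumed $\kappa<n/4$. A cut is a set $U\subset V$ whose removal disconnects $G$; a $\kappa$-cut is a cut of size $\kappa$; a side of $U$ is a connected component of the subgraph induced on $V\setminus U$; $\mathrm{Side}_U(x)$ is the side containing $x\notin U$; a set disconnects two vertices if they lie in different sides of it. For vertices $u\neq v$, $\kappa(u,v)$ is the maximum number of internally vertex-disjoint $u$–$v$ paths, equivalently the minimum size of a set consisting of vertices other than $u,v$ and possibly the edge $\{u,v\}$ whose removal disconnects $u$ from $v$. For a vertex $x$ and $t\le\lceil\frac{n-\kappa}{2}\rceil$, $\mathrm{Small}_t(x)$ denotes, when it exists, the unique $\kappa$-cut $Y$ with $x\notin Y$, $|\mathrm{Side}_Y(x)|\le t$, and $\mathrm{Side}_Y(x)\subseteq\mathrm{Side}_U(x)$ for every $\kappa$-cut $U$ with $x\notin U$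 and $|\mathrm{Side}_U(x)|\le t$ (it exists iff some $\kappa$-cut $U$ with $x\notin U$ has $|\mathrm{Side}_U(x)|\le t$). *)

theory Defs
  imports Main
begin

definition simple_graph :: "'a set \<Rightarrow> 'a set set \<Rightarrow> bool" where
  "simple_graph V E \<longleftrightarrow> finite V \<and> (\<forall>e\<in>E. \<exists>x y. e = {x, y} \<and> x \<noteq> y \<and> x \<in> V \<and> y \<in> V)"

definition adj_in :: "'a set set \<Rightarrow> 'a set \<Rightarrow> 'a \<Rightarrow> 'a \<Rightarrow> bool" where
  "adj_in E S x y \<longleftrightarrow> x \<in> S \<and> y \<in> S \<and> {x, y} \<in> E"

definition reach :: "'a set set \<Rightarrow> 'a set \<Rightarrow> 'a \<Rightarrow> 'a \<Rightarrow> bool" where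
  "reach E S = (adj_in E S)\<^sup>*\<^sup>*"

definition connected_graph :: "'a set \<Rightarrow> 'a set set \<Rightarrow> bool" where
  "connected_graph V E \<longleftrightarrow> V \<noteq> {} \<and> (\<forall>x\<in>V. \<forall>y\<in>V. reach E V x y)"

definition complete_graph :: "'a set \<Rightarrow> 'a set set \<Rightarrow> bool" where
  "complete_graph V E \<longleftrightarrow> (\<forall>x\<in>V. \<forall>y\<in>V. x \<noteq> y \<longrightarrow> {x, y} \<in> E)"

definition is_cut :: "'a set \<Rightarrow> 'a set set \<Rightarrow> 'a set \<Rightarrow> bool" where
  "is_cut V E U \<longleftrightarrow> U \<subseteq> V \<and> (\<exists>x\<in>V - U. \<exists>y\<in>V - U. \<not> reach E (V - U) x y)"

text \<open>Vertex connectivity: minimum size of a cut (G non-complete).\<close>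
definition vertex_conn :: "'a set \<Rightarrow> 'a set set \<Rightarrow> nat" where
  "vertex_conn V E = (LEAST k. \<exists>U. is_cut V E U \<and> card U = k)"

definition kappa_cut :: "'a set \<Rightarrow> 'a set set \<Rightarrow> 'a set \<Rightarrow> bool" where
  "kappa_cut V E U \<longleftrightarrow> is_cut V E U \<and> card U = vertex_conn V E"

definition side :: "'a set \<Rightarrow> 'a set set \<Rightarrow> 'a set \<Rightarrow> 'a \<Rightarrow> 'a set" where
  "side V E U x = {y \<in> V - U. reach E (V - U) x y}"

definition disconnects :: "'a set \<Rightarrow> 'a set set \<Rightarrow> 'a set \<Rightarrow> 'a \<Rightarrow> 'a \<Rightarrow> bool" where
  "disconnects V E U u v \<longleftrightarrow> u \<in> V - U \<and> v \<in> V - U \<and> side V E U u \<noteq> side V E U v"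

text \<open>Local connectivity kappa(u,v): minimum size of a set consisting of vertices
  other than u, v and possibly the edge {u,v}, whose removal disconnects u from v.\<close>
definition local_conn :: "'a set \<Rightarrow> 'a set set \<Rightarrow> 'a \<Rightarrow> 'a \<Rightarrow> nat" where
  "local_conn V E u v = (LEAST k. \<exists>X b. X \<subseteq> V - {u, v} \<and>
      (b \<longrightarrow> {u, v} \<in> E) \<and> k = card X + (if b then 1 else 0) \<and>
      \<not> reach (if b then E - {{u, v}} else E) (V - X) u v)"

definition is_small :: "'a set \<Rightarrow> 'a set set \<Rightarrow> nat \<Rightarrow> 'a \<Rightarrow> 'a set \<Rightarrow> bool" where
  "is_small V E t x Y \<longleftrightarrow> kappa_cut V E Y \<and> x \<notin> Y \<and> card (side V E Y x) \<le> t \<and>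
     (\<forall>U. kappa_cut V E U \<and> x \<notin> U \<and> card (side V E U x) \<le> t \<longrightarrow> side V E Y x \<subseteq> side V E U x)"

end

(* Take a minimum separator of u and v; when uv is an edge it consists of the edge uv and
   kappa - 1 vertices. The components of u and v left by it have at most n - kappa + 1
   vertices together, so one of them, say that of u, has at most t vertices, and the
   separator (with v added in the edge case) is a kappa-cut whose side at u is small.
   Small(u) then exists because such sides are closed under intersection: for two kappa-cuts
   with small sides at u, the corner between these sides is again a kappa-cut, as the
   opposite corner has at least kappa vertices, being a cut itself or, when the region
   opposite to u is empty, by counting. The side of Small(u) lies in the component of u, and
   since every vertex of a kappa-cut has a neighbour in each of its sides, v lies outside
   Small(u) if uv is not an edge and inside it if uv is an edge. *)

theory Submission
  imports Defs
begin

definition nbr_closed :: "'a set set \<Rightarrow> 'a set \<Rightarrow> 'a set \<Rightarrow> bool" where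
  "nbr_closed E S A \<longleftrightarrow> (\<forall>a\<in>A. \<forall>b\<in>S. {a, b} \<in> E \<longrightarrow> b \<in> A)"

lemma reach_nbr_closed:
  assumes "reach E S x y" "nbr_closed E S A" "x \<in> A"
  shows "y \<in> A"
  using assms(1) unfolding reach_def
  by (induction rule: rtranclp_induct) (use assms(2,3) in \<open>auto simp: adj_in_def nbr_closed_def\<close>)

lemma reach_sym: "reach E S x y \<Longrightarrow> reach E S y x"
  unfolding reach_def
proof (induction rule: rtranclp_induct)
  case (step y z)
  then have "adj_in E S z y" by (auto simp: adj_in_def insert_commute)
  then show ?case using step.IH by (rule converse_rtranclp_into_rtranclp)
qed simp

lemma reach_trans: "reach E S x y \<Longrightarrow> reach E S y z \<Longrightarrow> reach E S x z"
  unfolding reach_def by (rule rtranclp_trans)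

lemma reach_edge: "x \<in> S \<Longrightarrow> y \<in> S \<Longrightarrow> {x, y} \<in> E \<Longrightarrow> reach E S x y"
  by (simp add: reach_def adj_in_def r_into_rtranclp)

lemma reach_refl: "reach E S x x"
  by (simp add: reach_def)

lemma not_reach_doubleton: "{u, v} \<notin> E \<Longrightarrow> u \<noteq> v \<Longrightarrow> \<not> reach E {u, v} u v"
  using reach_nbr_closed[of E "{u, v}" u v "{u}"] by (auto simp: nbr_closed_def)

lemma nbr_closed_component: "nbr_closed E S {w \<in> S. reach E S u w}"
  by (auto simp: nbr_closed_def intro: reach_trans reach_edge)

lemma nbr_closed_side: "nbr_closed E (V - U) (side V E U x)"
  unfolding side_def by (rule nbr_closed_component)

lemma nbr_closed_Diff: "nbr_closed E S A \<Longrightarrow> nbr_closed E S (S - A)"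
  unfolding nbr_closed_def by (metis Diff_iff insert_commute)

lemma side_subset: "side V E U x \<subseteq> V - U"
  by (auto simp: side_def)

lemma self_in_side: "x \<in> V - U \<Longrightarrow> x \<in> side V E U x"
  by (simp add: side_def reach_refl)

lemma card_components_le:
  assumes "finite S" "\<not> reach E S u v"
  shows "card {w \<in> S. reach E S u w} + card {w \<in> S. reach E S v w} \<le> card S"
proof -
  have "{w \<in> S. reach E S u w} \<inter> {w \<in> S. reach E S v w} = {}"
    using assms(2) by (auto intro: reach_trans reach_sym)
  then show ?thesis
    using assms(1) by (simp add: card_Un_disjoint[symmetric] card_mono)
qed

lemma is_cutI:
  "U \<subseteq> V \<Longrightarrow> x \<in> V - U \<Longrightarrow> y \<in> V - U \<Longrightarrow> \<not> reach E (V - U) x y \<Longrightarrow> is_cut V E U"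
  unfolding is_cut_def by blast

lemma vertex_conn_le_card: "is_cut V E U \<Longrightarrow> vertex_conn V E \<le> card U"
  unfolding vertex_conn_def by (rule Least_le) auto

lemma vertex_conn_pos:
  assumes "finite V" "connected_graph V E" "\<not> complete_graph V E"
  shows "1 \<le> vertex_conn V E"
proof -
  obtain x y where xy: "x \<in> V" "y \<in> V" "x \<noteq> y" "{x, y} \<notin> E"
    using assms(3) unfolding complete_graph_def by blast
  have "V - (V - {x, y}) = {x, y}" using xy by blast
  then have "is_cut V E (V - {x, y})"
    using is_cutI[of "V - {x, y}" V x y E] not_reach_doubleton[OF xy(4,3)] xy by auto
  then obtain U where U: "is_cut V E U" "card U = vertex_conn V E"
    unfolding vertex_conn_def using LeastI_ex[of "\<lambda>k. \<exists>U. is_cut V E U \<and> card U = k"] by blast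
  have "U \<noteq> {}" using U(1) assms(2) unfolding is_cut_def connected_graph_def by auto
  moreover have "finite U" using U(1) assms(1) unfolding is_cut_def by (auto intro: finite_subset)
  ultimately have "card U > 0" by (simp add: card_gt_0_iff)
  then show ?thesis using U(2) by simp
qed

lemma local_conn_witness:
  assumes "u \<in> V" "v \<in> V" "u \<noteq> v"
  obtains X b where "X \<subseteq> V - {u, v}" "b \<longrightarrow> {u, v} \<in> E"
    "local_conn V E u v = card X + (if b then 1 else 0)"
    "\<not> reach (if b then E - {{u, v}} else E) (V - X) u v"
proof -
  have "V - (V - {u, v}) = {u, v}" using assms by blast
  then have "\<not> reach (if {u, v} \<in> E then E - {{u, v}} else E) (V - (V - {u, v})) u v"
    using not_reach_doubleton[of u v E] not_reach_doubleton[of u v "E - {{u, v}}"] assms(3) by simp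
  then have "\<exists>k X b. X \<subseteq> V - {u, v} \<and> (b \<longrightarrow> {u, v} \<in> E) \<and>
      k = card X + (if b then 1 else 0) \<and> \<not> reach (if b then E - {{u, v}} else E) (V - X) u v"
    by (intro exI[where x="V - {u, v}"] exI[where x="{u, v} \<in> E"]
        exI[where x="card (V - {u, v}) + (if {u, v} \<in> E then 1 else 0)"]) simp
  from LeastI_ex[OF this] show ?thesis
    using that unfolding local_conn_def by blast
qed

lemma kappa_cut_has_nbr_in_side:
  assumes "finite V" "kappa_cut V E Y" "y \<in> Y" "x \<in> V - Y"
  shows "\<exists>a \<in> side V E Y x. {a, y} \<in> E"
proof (rule ccontr)
  assume no_nbr: "\<not> (\<exists>a \<in> side V E Y x. {a, y} \<in> E)"
  have YV: "Y \<subseteq> V" and card_Y: "card Y = vertex_conn V E"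
    using assms(2) by (auto simp: kappa_cut_def is_cut_def)
  have "nbr_closed E (V - (Y - {y})) (side V E Y x)"
    using nbr_closed_side[of E V Y x] no_nbr unfolding nbr_closed_def by blast
  then have "\<not> reach E (V - (Y - {y})) x y"
    using reach_nbr_closed self_in_side[OF assms(4)] side_subset assms(3) by fast
  then have "is_cut V E (Y - {y})"
    using YV assms(3,4) by (auto intro: is_cutI)
  then have "vertex_conn V E \<le> card Y - 1"
    using vertex_conn_le_card assms(3) by fastforce
  moreover have "card Y > 0"
    using assms(1,3) YV by (auto simp: card_gt_0_iff intro: finite_subset)
  ultimately show False using card_Y by linarith
qed

text \<open>If A is a union of sides of the cut Y and B one of the cut U, then \<open>corner Y A U B\<close>
  is the part of \<open>Y \<union> U\<close> bordering \<open>A \<inter> B\<close>.\<close>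

definition corner :: "'a set \<Rightarrow> 'a set \<Rightarrow> 'a set \<Rightarrow> 'a set \<Rightarrow> 'a set" where
  "corner Y A U B = A \<inter> U \<union> Y \<inter> U \<union> Y \<inter> B"

lemma nbr_closed_corner_Int:
  assumes "nbr_closed E (V - Y) A" "nbr_closed E (V - U) B"
  shows "nbr_closed E (V - corner Y A U B) (A \<inter> B)"
  using assms unfolding nbr_closed_def corner_def by blast

lemma corner_is_cut:
  assumes "Y \<subseteq> V" "U \<subseteq> V" "A \<subseteq> V - Y" "B \<subseteq> V - U"
    and "nbr_closed E (V - Y) A" "nbr_closed E (V - U) B"
    and "p \<in> A \<inter> B" "q \<in> V - corner Y A U B" "q \<notin> A \<inter> B"
  shows "is_cut V E (corner Y A U B)"
proof -
  have "\<not> reach E (V - corner Y A U B) p q"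
    using reach_nbr_closed[OF _ nbr_closed_corner_Int[OF assms(5,6)] assms(7)] assms(9) by blast
  moreover have "p \<in> V - corner Y A U B"
    using assms(3,4,7) unfolding corner_def by blast
  moreover have "corner Y A U B \<subseteq> V"
    using assms(1-4) unfolding corner_def by blast
  ultimately show ?thesis
    using assms(8) by (intro is_cutI)
qed

lemma side_corner_subset:
  assumes "x \<in> V - (Y \<union> U)"
  shows "side V E (corner Y (side V E Y x) U (side V E U x)) x \<subseteq> side V E Y x \<inter> side V E U x"
proof
  fix y
  assume "y \<in> side V E (corner Y (side V E Y x) U (side V E U x)) x"
  then have "reach E (V - corner Y (side V E Y x) U (side V E U x)) x y"
    by (simp add: side_def)
  moreover have "x \<in> side V E Y x \<inter> side V E U x"
    using self_in_side assms by fast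
  ultimately show "y \<in> side V E Y x \<inter> side V E U x"
    using reach_nbr_closed nbr_closed_corner_Int[OF nbr_closed_side nbr_closed_side] by fast
qed

lemma card_corner_add_opposite:
  assumes "finite V" "Y \<subseteq> V" "U \<subseteq> V" "A \<subseteq> V - Y" "B \<subseteq> V - U"
  shows "card (corner Y A U B) + card (corner Y (V - Y - A) U (V - U - B)) = card Y + card U"
proof -
  let ?C = "corner Y A U B" and ?D = "corner Y (V - Y - A) U (V - U - B)"
  have "?C \<union> ?D = Y \<union> U" "?C \<inter> ?D = Y \<inter> U"
    using assms(2-5) unfolding corner_def by blast+
  moreover have "finite Y" "finite U" "finite ?C" "finite ?D"
    using assms unfolding corner_def by (auto intro: finite_subset)
  ultimately show ?thesis
    by (metis card_Un_Int)
qed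

lemma card_eq_if_opposite_empty:
  assumes "finite V" "Y \<subseteq> V" "U \<subseteq> V" "A \<subseteq> V - Y" "B \<subseteq> V - U"
    and "(V - Y - A) \<inter> (V - U - B) = {}"
  shows "card V = card (A \<union> B) + card (corner Y (V - Y - A) U (V - U - B))"
proof -
  let ?D = "corner Y (V - Y - A) U (V - U - B)"
  have "V = (A \<union> B) \<union> ?D" "(A \<union> B) \<inter> ?D = {}"
    using assms(2-6) unfolding corner_def by blast+
  moreover have "finite (A \<union> B)" "finite ?D"
    using assms(1-5) unfolding corner_def by (auto intro: finite_subset)
  ultimately show ?thesis
    by (metis card_Un_disjoint)
qed

context
  fixes V :: "'a set" and E :: "'a set set" and t :: nat
  assumes finite_V: "finite V"
    and t_half: "2 * t \<le> card V - vertex_conn V E + 1"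
    and t_less: "t < card V - vertex_conn V E"
begin

lemma card_opposite_corner_ge:
  assumes YV: "Y \<subseteq> V" and UV: "U \<subseteq> V" and AY: "A \<subseteq> V - Y" and BU: "B \<subseteq> V - U"
    and closed: "nbr_closed E (V - Y) A" "nbr_closed E (V - U) B"
    and p: "p \<in> A \<inter> B" and card_A: "card A \<le> t" and card_B: "card B \<le> t"
  shows "vertex_conn V E \<le> card (corner Y (V - Y - A) U (V - U - B))"
proof (cases "(V - Y - A) \<inter> (V - U - B) = {}")
  case True
  have finite: "finite A" "finite B"
    using AY BU finite_V by (auto intro: finite_subset)
  then have "card (A \<union> B) + card (A \<inter> B) = card A + card B"
    by (rule card_Un_Int[symmetric])
  moreover have "card (A \<inter> B) > 0"
    using p finite by (auto simp: card_gt_0_iff)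
  moreover have "card V = card (A \<union> B) + card (corner Y (V - Y - A) U (V - U - B))"
    by (rule card_eq_if_opposite_empty[OF finite_V YV UV AY BU True])
  ultimately show ?thesis
    using card_A card_B t_half t_less by linarith
next
  case False
  then obtain w where w: "w \<in> (V - Y - A) \<inter> (V - U - B)" by blast
  have "is_cut V E (corner Y (V - Y - A) U (V - U - B))"
    by (rule corner_is_cut[OF YV UV _ _ nbr_closed_Diff[OF closed(1)] nbr_closed_Diff[OF closed(2)] w,
          where q = p])
      (use p AY BU in \<open>auto simp: corner_def\<close>)
  then show ?thesis by (rule vertex_conn_le_card)
qed

lemma kappa_cut_corner:
  assumes Y: "kappa_cut V E Y" and U: "kappa_cut V E U"
    and AY: "A \<subseteq> V - Y" and BU: "B \<subseteq> V - U"
    and closed: "nbr_closed E (V - Y) A" "nbr_closed E (V - U) B"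
    and p: "p \<in> A \<inter> B" and card_A: "card A \<le> t" and card_B: "card B \<le> t"
  shows "kappa_cut V E (corner Y A U B)"
proof -
  have YV: "Y \<subseteq> V" and UV: "U \<subseteq> V" and card_Y: "card Y = vertex_conn V E"
    and card_U: "card U = vertex_conn V E"
    using Y U by (auto simp: kappa_cut_def is_cut_def)
  have "card (V - Y - A) = card V - vertex_conn V E - card A"
    using card_Diff_subset[OF finite_subset[OF YV finite_V] YV]
      card_Diff_subset[OF finite_subset[OF AY] AY] finite_V card_Y by simp
  then have "card (V - Y - A) > 0"
    using card_A t_less by linarith
  then obtain z where "z \<in> V - Y - A"
    by (auto simp: card_gt_0_iff)
  then have cut: "is_cut V E (corner Y A U B)"
    by (intro corner_is_cut[OF YV UV AY BU closed p]) (auto simp: corner_def)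
  have "card (corner Y A U B) + card (corner Y (V - Y - A) U (V - U - B)) = card Y + card U"
    by (rule card_corner_add_opposite[OF finite_V YV UV AY BU])
  then have "card (corner Y A U B) = vertex_conn V E"
    using vertex_conn_le_card[OF cut] card_opposite_corner_ge[OF YV UV AY BU closed p card_A card_B]
      card_Y card_U by linarith
  with cut show ?thesis
    by (simp add: kappa_cut_def)
qed

lemma small_exists:
  assumes "kappa_cut V E U" "x \<in> V - U" "card (side V E U x) \<le> t"
  shows "\<exists>Y. is_small V E t x Y"
proof -
  define F where "F Y \<longleftrightarrow> kappa_cut V E Y \<and> x \<notin> Y \<and> card (side V E Y x) \<le> t" for Y
  obtain Y where FY: "F Y" and least: "\<And>Z. F Z \<Longrightarrow> card (side V E Y x) \<le> card (side V E Z x)"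
    using ex_has_least_nat[of F U "\<lambda>Y. card (side V E Y x)"] assms unfolding F_def by blast
  have "side V E Y x \<subseteq> side V E U' x" if "F U'" for U'
  proof (rule ccontr)
    assume not_sub: "\<not> side V E Y x \<subseteq> side V E U' x"
    let ?C = "corner Y (side V E Y x) U' (side V E U' x)"
    have x: "x \<in> V - (Y \<union> U')"
      using FY that assms(2) unfolding F_def by blast
    have "side V E ?C x \<subset> side V E Y x"
      using side_corner_subset[OF x] not_sub by blast
    moreover have "finite (side V E Y x)"
      by (rule finite_subset[OF side_subset]) (simp add: finite_V)
    ultimately have smaller: "card (side V E ?C x) < card (side V E Y x)"
      by (rule psubset_card_mono[rotated])
    have "x \<in> side V E Y x \<inter> side V E U' x"
      using x by (auto intro: self_in_side)
    then have "kappa_cut V E ?C"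
      using FY that unfolding F_def
      by (intro kappa_cut_corner[OF _ _ side_subset side_subset nbr_closed_side nbr_closed_side]) auto
    moreover have "x \<notin> ?C"
      using x unfolding corner_def by blast
    ultimately have "F ?C"
      using smaller FY unfolding F_def by simp
    then show False
      using least smaller by fastforce
  qed
  then show ?thesis
    using FY unfolding is_small_def F_def by blast
qed

lemma small_disconnects_if_side_small:
  assumes X: "kappa_cut V E X" and u: "u \<in> V - X" and v: "v \<in> V - X"
    and not_reach: "\<not> reach E (V - X) u v" and small: "card (side V E X u) \<le> t"
  shows "\<exists>Y. is_small V E t u Y \<and> disconnects V E Y u v"
proof -
  obtain Y where Y: "is_small V E t u Y"
    using small_exists[OF X u small] by blast
  have uY: "u \<notin> Y" and kY: "kappa_cut V E Y" and sub: "side V E Y u \<subseteq> side V E X u"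
    using Y X u small unfolding is_small_def by blast+
  have v_side: "v \<notin> side V E X u"
    using not_reach by (simp add: side_def)
  have "v \<notin> Y"
  proof
    assume "v \<in> Y"
    then obtain a where "a \<in> side V E Y u" "{a, v} \<in> E"
      using kappa_cut_has_nbr_in_side[OF finite_V kY] u uY by blast
    then have "v \<in> side V E X u"
      using sub nbr_closed_side[of E V X u] v unfolding nbr_closed_def by blast
    with v_side show False ..
  qed
  then have "disconnects V E Y u v"
    unfolding disconnects_def using self_in_side[of v V Y E] sub v_side uY u v by blast
  with Y show ?thesis by blast
qed

lemma kappa_cut_insert_of_edge_separator:
  assumes X: "X \<subseteq> V - {u, v}" "card X + 1 = vertex_conn V E" and u: "u \<in> V" and v: "v \<in> V"
    and not_reach: "\<not> reach (E - {{u, v}}) (V - X) u v"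
  defines "A \<equiv> {w \<in> V - X. reach (E - {{u, v}}) (V - X) u w}"
  assumes small: "card A \<le> t"
  shows "kappa_cut V E (insert v X) \<and> side V E (insert v X) u \<subseteq> A"
proof -
  have closed: "nbr_closed (E - {{u, v}}) (V - X) A"
    unfolding A_def by (rule nbr_closed_component)
  have uA: "u \<in> A" and vA: "v \<notin> A"
    using u X not_reach by (auto simp: A_def reach_refl)
  have "nbr_closed E (V - insert v X) A"
    unfolding nbr_closed_def
  proof (intro ballI impI)
    fix a b
    assume a: "a \<in> A" and b: "b \<in> V - insert v X" and ab: "{a, b} \<in> E"
    have "{a, b} \<noteq> {u, v}"
      using a b vA by (auto simp: doubleton_eq_iff)
    then show "b \<in> A"
      using closed a b ab unfolding nbr_closed_def by blast
  qed
  then have side_sub: "side V E (insert v X) u \<subseteq> A"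
    using reach_nbr_closed uA by (fastforce simp: side_def)
  have finX: "finite X" and finA: "finite A"
    using X finite_V by (auto simp: A_def intro: finite_subset)
  have "card (V - X) = card V - card X"
    using card_Diff_subset[OF finX] X(1) by auto
  moreover have "card (V - X - A) = card (V - X) - card A"
    using card_Diff_subset[OF finA] by (auto simp: A_def)
  moreover have "v \<in> V - X - A"
    using v vA X(1) by blast
  ultimately have "card (V - X - A - {v}) > 0"
    using small t_less X(2) by simp
  then obtain y where y: "y \<in> V - X - A - {v}"
    by (auto simp: card_gt_0_iff)
  have "\<not> reach E (V - insert v X) u y"
    using side_sub y by (auto simp: side_def)
  moreover have "insert v X \<subseteq> V" "u \<in> V - insert v X" "y \<in> V - insert v X"
    using X(1) u v y uA vA by auto
  ultimately have "is_cut V E (insert v X)"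
    by (intro is_cutI)
  moreover have "card (insert v X) = vertex_conn V E"
    using X finX by (simp add: subset_Diff_insert)
  ultimately show ?thesis
    using side_sub by (simp add: kappa_cut_def)
qed

lemma small_separates_edge_if_component_small:
  assumes e: "{u, v} \<in> E" and X: "X \<subseteq> V - {u, v}" "card X + 1 = vertex_conn V E"
    and u: "u \<in> V" and v: "v \<in> V"
    and not_reach: "\<not> reach (E - {{u, v}}) (V - X) u v"
  defines "A \<equiv> {w \<in> V - X. reach (E - {{u, v}}) (V - X) u w}"
  assumes small: "card A \<le> t"
  shows "\<exists>Y. is_small V E t u Y \<and> v \<in> Y \<and> \<not> reach (E - {{u, v}}) (V - (Y - {v})) u v"
proof -
  have cut: "kappa_cut V E (insert v X)" and side_sub: "side V E (insert v X) u \<subseteq> A"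
    using kappa_cut_insert_of_edge_separator[OF X u v not_reach small[unfolded A_def]]
    unfolding A_def by blast+
  have uA: "u \<in> A" and vA: "v \<notin> A"
    using u X not_reach by (auto simp: A_def reach_refl)
  have u_out: "u \<in> V - insert v X"
    using X u uA vA by auto
  have small_side: "card (side V E (insert v X) u) \<le> t"
    using card_mono[OF _ side_sub] small finite_V by (simp add: A_def)
  then obtain Y where Y: "is_small V E t u Y"
    using small_exists[OF cut u_out] by blast
  have uY: "u \<notin> Y" and sub: "side V E Y u \<subseteq> A"
    using Y cut u_out side_sub small_side unfolding is_small_def by blast+
  have uS: "u \<in> side V E Y u"
    using self_in_side u uY by fast
  have vY: "v \<in> Y"
  proof (rule ccontr)
    assume "v \<notin> Y"
    then have "v \<in> side V E Y u"
      using nbr_closed_side[of E V Y u] uS e v unfolding nbr_closed_def by blast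
    with sub vA show False by blast
  qed
  have "nbr_closed (E - {{u, v}}) (V - (Y - {v})) (side V E Y u)"
    unfolding nbr_closed_def
  proof (intro ballI impI)
    fix a b
    assume a: "a \<in> side V E Y u" and b: "b \<in> V - (Y - {v})" and ab: "{a, b} \<in> E - {{u, v}}"
    show "b \<in> side V E Y u"
    proof (cases "b = v")
      case True
      then have "v \<in> A"
        using nbr_closed_component[of "E - {{u, v}}" "V - X" u] a sub ab X v
        unfolding nbr_closed_def A_def by blast
      with vA show ?thesis ..
    next
      case False
      then show ?thesis
        using nbr_closed_side[of E V Y u] a b ab unfolding nbr_closed_def by blast
    qed
  qed
  then have "\<not> reach (E - {{u, v}}) (V - (Y - {v})) u v"
    using reach_nbr_closed uS vY side_subset by fast
  with Y vY show ?thesis by blast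
qed

lemma nonadjacent_disconnected_by_small:
  assumes t_ceil: "card V - vertex_conn V E \<le> 2 * t"
    and u: "u \<in> V" and v: "v \<in> V" and "u \<noteq> v" and nonadj: "{u, v} \<notin> E"
    and local_conn: "local_conn V E u v = vertex_conn V E"
  shows "(\<exists>Y. is_small V E t u Y \<and> disconnects V E Y u v) \<or>
    (\<exists>Y. is_small V E t v Y \<and> disconnects V E Y u v)"
proof -
  obtain X b where X: "X \<subseteq> V - {u, v}" "b \<longrightarrow> {u, v} \<in> E"
    "local_conn V E u v = card X + (if b then 1 else 0)"
    "\<not> reach (if b then E - {{u, v}} else E) (V - X) u v"
    using local_conn_witness[OF u v \<open>u \<noteq> v\<close>] .
  then have card_X: "card X = vertex_conn V E" and not_reach: "\<not> reach E (V - X) u v"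
    using nonadj local_conn by auto
  have uX: "u \<in> V - X" and vX: "v \<in> V - X"
    using X(1) u v by auto
  have XV: "X \<subseteq> V"
    using X(1) by blast
  then have cut: "kappa_cut V E X"
    unfolding kappa_cut_def using is_cutI[OF _ uX vX not_reach] card_X by simp
  have "card (V - X) = card V - vertex_conn V E"
    using card_Diff_subset[OF finite_subset[OF XV finite_V] XV] card_X by simp
  then have "card (side V E X u) + card (side V E X v) \<le> card V - vertex_conn V E"
    using card_components_le[OF _ not_reach] finite_V unfolding side_def by simp
  then consider "card (side V E X u) \<le> t" | "card (side V E X v) \<le> t"
    using t_ceil by linarith
  then show ?thesis
  proof cases
    case 1
    then show ?thesis
      using small_disconnects_if_side_small[OF cut uX vX not_reach] by blast
  next
    case 2
    moreover have "\<not> reach E (V - X) v u"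
      using not_reach reach_sym by fast
    ultimately obtain Y where "is_small V E t v Y" "disconnects V E Y v u"
      using small_disconnects_if_side_small[OF cut vX uX] by blast
    then show ?thesis
      unfolding disconnects_def by auto
  qed
qed

lemma adjacent_separated_by_small:
  assumes t_ceil: "card V - vertex_conn V E \<le> 2 * t"
    and u: "u \<in> V" and v: "v \<in> V" and "u \<noteq> v" and adj: "{u, v} \<in> E"
    and local_conn: "local_conn V E u v = vertex_conn V E"
  shows "(\<exists>Y. is_small V E t u Y \<and> v \<in> Y \<and> \<not> reach (E - {{u, v}}) (V - (Y - {v})) u v) \<or>
    (\<exists>Y. is_small V E t v Y \<and> u \<in> Y \<and> \<not> reach (E - {{u, v}}) (V - (Y - {u})) v u)"
proof -
  obtain X b where X: "X \<subseteq> V - {u, v}" "b \<longrightarrow> {u, v} \<in> E"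
    "local_conn V E u v = card X + (if b then 1 else 0)"
    "\<not> reach (if b then E - {{u, v}} else E) (V - X) u v"
    using local_conn_witness[OF u v \<open>u \<noteq> v\<close>] .
  have "reach E (V - X) u v"
    using X(1) u v by (intro reach_edge adj) auto
  then have b
    using X(4) by (cases b) simp_all
  then have card_X: "card X + 1 = vertex_conn V E"
    and not_reach: "\<not> reach (E - {{u, v}}) (V - X) u v"
    using X(3,4) local_conn by simp_all
  have XV: "X \<subseteq> V"
    using X(1) by blast
  then have "card (V - X) = card V - card X"
    using card_Diff_subset[OF finite_subset[OF XV finite_V]] by simp
  then have "card {w \<in> V - X. reach (E - {{u, v}}) (V - X) u w} +
      card {w \<in> V - X. reach (E - {{u, v}}) (V - X) v w} \<le> card V - card X"
    using card_components_le[OF _ not_reach] finite_V by simp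
  then consider "card {w \<in> V - X. reach (E - {{u, v}}) (V - X) u w} \<le> t"
    | "card {w \<in> V - X. reach (E - {{u, v}}) (V - X) v w} \<le> t"
    using t_ceil t_less card_X by linarith
  then show ?thesis
  proof cases
    case 1
    then show ?thesis
      using small_separates_edge_if_component_small[OF adj X(1) card_X u v not_reach] by blast
  next
    case 2
    have swap: "{v, u} = {u, v}"
      by (rule insert_commute)
    have "\<not> reach (E - {{u, v}}) (V - X) v u"
      using not_reach reach_sym by fast
    then show ?thesis
      using small_separates_edge_if_component_small[of v u X] adj X(1) card_X u v 2
      unfolding swap by blast
  qed
qed

end

theorem lemma7:
  fixes V :: "'a set" and E :: "'a set set" and u v :: 'a
  assumes "simple_graph V E" and "connected_graph V E" and "\<not> complete_graph V E"
    and "4 * vertex_conn V E < card V"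
    and "u \<in> V" and "v \<in> V" and "u \<noteq> v"
    and "local_conn V E u v = vertex_conn V E"
  shows "({u, v} \<notin> E \<longrightarrow>
           (\<exists>Y. is_small V E ((card V - vertex_conn V E + 1) div 2) u Y \<and> disconnects V E Y u v) \<or>
           (\<exists>Y. is_small V E ((card V - vertex_conn V E + 1) div 2) v Y \<and> disconnects V E Y u v))
       \<and> ({u, v} \<in> E \<longrightarrow>
           (\<exists>Y. is_small V E ((card V - vertex_conn V E + 1) div 2) u Y \<and> v \<in> Y \<and>
                \<not> reach (E - {{u, v}}) (V - (Y - {v})) u v) \<or>
           (\<exists>Y. is_small V E ((card V - vertex_conn V E + 1) div 2) v Y \<and> u \<in> Y \<and>
                \<not> reach (E - {{u, v}}) (V - (Y - {u})) v u))"
proof -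
  define t where "t = (card V - vertex_conn V E + 1) div 2"
  have finite_V: "finite V"
    using assms(1) by (simp add: simple_graph_def)
  have "1 \<le> vertex_conn V E"
    using vertex_conn_pos[OF finite_V assms(2,3)] .
  then have "2 * t \<le> card V - vertex_conn V E + 1" "t < card V - vertex_conn V E"
    "card V - vertex_conn V E \<le> 2 * t"
    using assms(4) unfolding t_def by linarith+
  then show ?thesis
    using nonadjacent_disconnected_by_small[OF finite_V] adjacent_separated_by_small[OF finite_V]
      assms(5-8) unfolding t_def[symmetric] by blast
qed

end
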